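(* Let $F=\breve F(\alpha_1,\dots,\alpha_t)$ be a fence with shared elements $s_1,\dots,s_{t-1}$. Then the set $X=\{\chi_{s_i}: 1\le i\le t-1\}$ is linearly independent and $\operatorname{Span}_{\mathbb R}(X)\cap A_T(F)=\{0\}$.
   Context: Fences: let $\alpha=(\alpha_1,\dots,\alpha_t)$ be positive integers with $t\ge2$ and $\alpha_1,\alpha_t\ge2$. Put $a_0=0$, $a_i=\alpha_1+\dots+\alpha_i$, $n=a_t-1$. The fence $\breve F(\alpha)$ is the poset on $\{x_1,\dots,x_n\}$ whose cover relations are: for $1\le j\le n-1$ with $a_{i-1}\le j<a_i$, $x_j\lessdot x_{j+1}$ if $i$ is odd and $x_j\gtrdot x_{j+1}$ if $i$ is even. The shared elements are $s_i=x_{a_i}$, $i\in[t-1]$. $\mathcal J(F)$ is the set of order ideals. For $q\in F$, $I\in\mathcal J(F)$: $\chi_q(I)=1$ if $q\in\max(I)$, else $0$; $T_q(I)=1$ if $q\in\min(F\setminus I)$, $-1$ if $q\in\max(I)$, $0$ otherwise. For $f:\mathcal J(F)\to\mathbb R$, write $f\equiv\text{const}$ if $f=c+\sum_{q\in F}c_qT_q$ for some real constants $c,c_q$. The antichain toggleability space is $A_T(F)=\{f\in\operatorname{Span}_{\mathbb R}\{\chi_q:q\in F\}: f\equiv\text{const}\}$. *)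

theory Defs
  imports Main Complex_Main
begin

text \<open>A composition alpha = (alpha_1,...,alpha_t) is a list; alpha_i = alpha ! (i-1).
  Elements x_1,...,x_n of the fence are represented by the naturals 1..n.\<close>

definition fence_comp :: "nat list \<Rightarrow> bool" where
  "fence_comp \<alpha> \<longleftrightarrow> length \<alpha> \<ge> 2 \<and> (\<forall>k\<in>set \<alpha>. k > 0) \<and> hd \<alpha> \<ge> 2 \<and> last \<alpha> \<ge> 2"

definition apart :: "nat list \<Rightarrow> nat \<Rightarrow> nat" where
  "apart \<alpha> i = sum_list (take i \<alpha>)"

definition fsize :: "nat list \<Rightarrow> nat" where
  "fsize \<alpha> = apart \<alpha> (length \<alpha>) - 1"

definition fence_elems :: "nat list \<Rightarrow> nat set" where
  "fence_elems \<alpha> = {1..fsize \<alpha>}"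

definition odd_seg :: "nat list \<Rightarrow> nat \<Rightarrow> bool" where
  "odd_seg \<alpha> j \<longleftrightarrow> (\<exists>i. 1 \<le> i \<and> i \<le> length \<alpha> \<and> apart \<alpha> (i - 1) \<le> j \<and> j < apart \<alpha> i \<and> odd i)"

definition fence_covers :: "nat list \<Rightarrow> (nat \<times> nat) set" where
  "fence_covers \<alpha> =
     {(j, j + 1) | j. 1 \<le> j \<and> j \<le> fsize \<alpha> - 1 \<and> odd_seg \<alpha> j} \<union>
     {(j + 1, j) | j. 1 \<le> j \<and> j \<le> fsize \<alpha> - 1 \<and> \<not> odd_seg \<alpha> j}"

definition fence_le :: "nat list \<Rightarrow> nat \<Rightarrow> nat \<Rightarrow> bool" where
  "fence_le \<alpha> x y \<longleftrightarrow> x \<in> fence_elems \<alpha> \<and> y \<in> fence_elems \<alpha> \<and> (x, y) \<in> (fence_covers \<alpha>)\<^sup>*"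

definition fence_lt :: "nat list \<Rightarrow> nat \<Rightarrow> nat \<Rightarrow> bool" where
  "fence_lt \<alpha> x y \<longleftrightarrow> fence_le \<alpha> x y \<and> x \<noteq> y"

definition shared :: "nat list \<Rightarrow> nat \<Rightarrow> nat" where
  "shared \<alpha> i = apart \<alpha> i"

definition order_ideals :: "nat list \<Rightarrow> nat set set" where
  "order_ideals \<alpha> = {I. I \<subseteq> fence_elems \<alpha> \<and>
      (\<forall>x y. fence_le \<alpha> x y \<and> y \<in> I \<longrightarrow> x \<in> I)}"

definition is_max_in :: "nat list \<Rightarrow> nat \<Rightarrow> nat set \<Rightarrow> bool" where
  "is_max_in \<alpha> q S \<longleftrightarrow> q \<in> S \<and> \<not> (\<exists>y\<in>S. fence_lt \<alpha> q y)"

definition is_min_in :: "nat list \<Rightarrow> nat \<Rightarrow> nat set \<Rightarrow> bool" where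
  "is_min_in \<alpha> q S \<longleftrightarrow> q \<in> S \<and> \<not> (\<exists>y\<in>S. fence_lt \<alpha> y q)"

definition chi :: "nat list \<Rightarrow> nat \<Rightarrow> nat set \<Rightarrow> real" where
  "chi \<alpha> q I = (if is_max_in \<alpha> q I then 1 else 0)"

definition tog :: "nat list \<Rightarrow> nat \<Rightarrow> nat set \<Rightarrow> real" where
  "tog \<alpha> q I = (if is_min_in \<alpha> q (fence_elems \<alpha> - I) then 1
                 else if is_max_in \<alpha> q I then -1 else 0)"

text \<open>Functions J(F) -> R are represented by nat set => real, compared on order ideals only.\<close>
definition in_span_chi :: "nat list \<Rightarrow> (nat set \<Rightarrow> real) \<Rightarrow> bool" where
  "in_span_chi \<alpha> f \<longleftrightarrow> (\<exists>d :: nat \<Rightarrow> real. \<forall>I\<in>order_ideals \<alpha>.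
      f I = (\<Sum>q\<in>fence_elems \<alpha>. d q * chi \<alpha> q I))"

definition toggle_const :: "nat list \<Rightarrow> (nat set \<Rightarrow> real) \<Rightarrow> bool" where
  "toggle_const \<alpha> f \<longleftrightarrow> (\<exists>(c :: real) (cq :: nat \<Rightarrow> real). \<forall>I\<in>order_ideals \<alpha>.
      f I = c + (\<Sum>q\<in>fence_elems \<alpha>. cq q * tog \<alpha> q I))"

definition in_AT :: "nat list \<Rightarrow> (nat set \<Rightarrow> real) \<Rightarrow> bool" where
  "in_AT \<alpha> f \<longleftrightarrow> in_span_chi \<alpha> f \<and> toggle_const \<alpha> f"

end

theory Submission
  imports Defs
begin

text \<open>Suppose f = \<Sum>i. d_i chi_{s_i} = c + \<Sum>q. c_q T_q on all order ideals, and put D = d on the shared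
  elements, D = 0 elsewhere. Then \<Sum>r. (D_r chi_r - c_r T_r) is constant, and its r-th summand only depends
  on how the ideal meets {x_{r-1}, x_r, x_{r+1}}. Comparing two ideals that differ only in x_q gives a
  three-term recurrence D_q + 2 c_q = w_{q-1} + w_{q+1} for suitable weights w, and comparing four ideals
  that differ independently in x_{m-1} and x_{m+1} shows that w vanishes at the peaks and valleys of the
  fence. Since D vanishes elsewhere, w is discrete harmonic off the peaks and valleys, hence w = 0 by the
  maximum principle, and then the recurrence forces D = 0 at the peaks and valleys, which are exactly the
  shared elements. Linear independence is the special case c = 0, c_q = 0.\<close>

lemma apart_0 [simp]: "apart xs 0 = 0"
  by (simp add: apart_def)

lemma apart_Suc: "i < length xs \<Longrightarrow> apart xs (Suc i) = apart xs i + xs ! i"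
  by (simp add: apart_def take_Suc_conv_app_nth)

lemma apart_strict_mono:
  assumes pos: "\<forall>k\<in>set xs. k > 0" and "i < j" "j \<le> length xs"
  shows "apart xs i < apart xs j"
  using assms(2,3)
proof (induction j)
  case (Suc j)
  have "apart xs j < apart xs (Suc j)"
    using apart_Suc[of j xs] pos Suc.prems by (simp add: nth_mem)
  moreover have "apart xs i \<le> apart xs j"
    using Suc by (cases "i = j") auto
  ultimately show ?case by simp
qed simp

lemma apart_mono:
  assumes "\<forall>k\<in>set xs. k > 0" "i \<le> j" "j \<le> length xs"
  shows "apart xs i \<le> apart xs j"
  using apart_strict_mono[OF assms(1) _ assms(3), of i] assms(2) by (cases "i = j") auto

lemma odd_seg_iff:
  assumes pos: "\<forall>k\<in>set xs. k > 0"
    and i: "1 \<le> i" "i \<le> length xs" "apart xs (i - 1) \<le> j" "j < apart xs i"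
  shows "odd_seg xs j \<longleftrightarrow> odd i"
proof
  assume "odd_seg xs j"
  then obtain i' where i': "1 \<le> i'" "i' \<le> length xs" "apart xs (i' - 1) \<le> j" "j < apart xs i'" "odd i'"
    unfolding odd_seg_def by blast
  have "\<not> i' < i"
    using apart_mono[OF pos, of i' "i - 1"] i i' by (auto simp: less_iff_Suc_add)
  moreover have "\<not> i < i'"
    using apart_mono[OF pos, of i "i' - 1"] i i' by (auto simp: less_iff_Suc_add)
  ultimately show "odd i" using i' by simp
next
  assume "odd i"
  then show "odd_seg xs j" unfolding odd_seg_def using i by blast
qed

locale fence =
  fixes \<alpha> :: "nat list"
  assumes composition: "fence_comp \<alpha>"
begin

abbreviation "t \<equiv> length \<alpha>"
abbreviation "n \<equiv> fsize \<alpha>"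
abbreviation "F \<equiv> fence_elems \<alpha>"
abbreviation rising :: "nat \<Rightarrow> bool" where "rising \<equiv> odd_seg \<alpha>"
abbreviation turning :: "nat \<Rightarrow> bool" where "turning p \<equiv> rising (p - 1) \<noteq> rising p"

lemma parts_pos: "\<forall>k\<in>set \<alpha>. k > 0"
  using composition by (simp add: fence_comp_def)

lemma length_ge_2: "t \<ge> 2"
  using composition by (simp add: fence_comp_def)

lemma nonempty: "\<alpha> \<noteq> []"
  using length_ge_2 by auto

lemma first_part_ge_2: "\<alpha> ! 0 \<ge> 2"
  using composition nonempty by (simp add: fence_comp_def hd_conv_nth)

lemma last_part_ge_2: "\<alpha> ! (t - 1) \<ge> 2"
  using composition nonempty by (simp add: fence_comp_def last_conv_nth)

lemma apart_1: "apart \<alpha> 1 = \<alpha> ! 0"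
  using apart_Suc[of 0 \<alpha>] nonempty by simp

lemma apart_length: "apart \<alpha> t = apart \<alpha> (t - 1) + \<alpha> ! (t - 1)"
proof -
  have "Suc (t - 1) = t" using length_ge_2 by simp
  then show ?thesis using apart_Suc[of "t - 1" \<alpha>] by simp
qed

lemma fsize_eq: "n = apart \<alpha> (t - 1) + \<alpha> ! (t - 1) - 1"
  using apart_length by (simp add: fsize_def)

lemma mem_elems_iff: "x \<in> F \<longleftrightarrow> 1 \<le> x \<and> x \<le> n"
  by (simp add: fence_elems_def)

lemma shared_bounds:
  assumes "i \<in> {1..t - 1}"
  shows "2 \<le> apart \<alpha> i" "apart \<alpha> i < n"
proof -
  have "apart \<alpha> 1 \<le> apart \<alpha> i" using apart_mono[OF parts_pos, of 1 i] assms by auto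
  then show "2 \<le> apart \<alpha> i" using apart_1 first_part_ge_2 by linarith
  have "apart \<alpha> i \<le> apart \<alpha> (t - 1)" using apart_mono[OF parts_pos, of i "t - 1"] assms by auto
  then show "apart \<alpha> i < n" using fsize_eq last_part_ge_2 by linarith
qed

lemma fsize_ge_3: "n \<ge> 3"
proof -
  have "1 \<in> {1..t - 1}" using length_ge_2 by simp
  then show ?thesis using shared_bounds[of 1] by linarith
qed

lemma shared_turning:
  assumes "i \<in> {1..t - 1}"
  shows "turning (apart \<alpha> i)"
proof -
  have i: "1 \<le> i" "i + 1 \<le> t" using assms by auto
  have "apart \<alpha> (i - 1) < apart \<alpha> i" "apart \<alpha> i < apart \<alpha> (i + 1)"
    using apart_strict_mono[OF parts_pos, of "i - 1" i] apart_strict_mono[OF parts_pos, of i "i + 1"]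
      i by auto
  then have "rising (apart \<alpha> i - 1) \<longleftrightarrow> odd i" "rising (apart \<alpha> i) \<longleftrightarrow> odd (i + 1)"
    using odd_seg_iff[OF parts_pos, of i "apart \<alpha> i - 1"] odd_seg_iff[OF parts_pos, of "i + 1" "apart \<alpha> i"]
      i by auto
  then show ?thesis by simp
qed

lemma inj_on_shared: "inj_on (apart \<alpha>) {1..t - 1}"
  by (rule strict_mono_on_imp_inj_on, rule strict_mono_onI)
    (use apart_strict_mono[OF parts_pos] in auto)

text \<open>The ends x_1 and x_n are extremal but not turning: the indices 0 and n lie in the first and the last
  segment, as if the end chains continued to fictitious elements x_0 and x_{n+1}.\<close>
lemma turning_bounds:
  assumes "p \<in> F" "turning p"
  shows "2 \<le> p" "p < n"
proof -
  have "rising 0" "rising 1"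
    using odd_seg_iff[OF parts_pos, of 1 0] odd_seg_iff[OF parts_pos, of 1 1]
      length_ge_2 apart_1 first_part_ge_2 by auto
  then have "p \<noteq> 1" using assms(2) by auto
  then show "2 \<le> p" using assms(1) by (simp add: mem_elems_iff)
  have "apart \<alpha> (t - 1) \<le> n - 1" "n < apart \<alpha> t"
    using fsize_eq last_part_ge_2 apart_length by linarith+
  then have "rising n \<longleftrightarrow> rising (n - 1)"
    using odd_seg_iff[OF parts_pos, of t n] odd_seg_iff[OF parts_pos, of t "n - 1"] length_ge_2 by auto
  then show "p < n" using assms by (auto simp: mem_elems_iff le_less)
qed

lemma covers_iff:
  "(x, y) \<in> fence_covers \<alpha> \<longleftrightarrow>
     (y = x + 1 \<and> 1 \<le> x \<and> x < n \<and> rising x) \<or> (x = y + 1 \<and> 1 \<le> y \<and> y < n \<and> \<not> rising y)"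
  using fsize_ge_3 unfolding fence_covers_def by auto

lemma covers_elems: "(x, y) \<in> fence_covers \<alpha> \<Longrightarrow> x \<in> F \<and> y \<in> F"
  unfolding covers_iff mem_elems_iff by auto

lemma upper_covers_iff:
  "q \<in> F \<Longrightarrow> (q, z) \<in> fence_covers \<alpha> \<longleftrightarrow>
     (z = q + 1 \<and> q < n \<and> rising q) \<or> (z = q - 1 \<and> 2 \<le> q \<and> \<not> rising (q - 1))"
  unfolding covers_iff mem_elems_iff by (cases q) auto

lemma lower_covers_iff:
  "q \<in> F \<Longrightarrow> (z, q) \<in> fence_covers \<alpha> \<longleftrightarrow>
     (z = q - 1 \<and> 2 \<le> q \<and> rising (q - 1)) \<or> (z = q + 1 \<and> q < n \<and> \<not> rising q)"
  unfolding covers_iff mem_elems_iff by (cases q) auto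

lemma cover_less: "(x, y) \<in> fence_covers \<alpha> \<Longrightarrow> fence_lt \<alpha> x y"
  using covers_elems[of x y] unfolding fence_lt_def fence_le_def by (auto simp: covers_iff)

lemma ideal_subset: "I \<in> order_ideals \<alpha> \<Longrightarrow> I \<subseteq> F"
  unfolding order_ideals_def by auto

lemma ideal_down_closed: "I \<in> order_ideals \<alpha> \<Longrightarrow> fence_le \<alpha> x y \<Longrightarrow> y \<in> I \<Longrightarrow> x \<in> I"
  unfolding order_ideals_def by auto

definition respects_cover :: "nat set \<Rightarrow> nat \<Rightarrow> bool" where
  "respects_cover I j \<longleftrightarrow> (if rising j then j + 1 \<in> I \<longrightarrow> j \<in> I else j \<in> I \<longrightarrow> j + 1 \<in> I)"

lemma order_idealI:
  assumes "I \<subseteq> F" and "\<And>j. 1 \<le> j \<Longrightarrow> j < n \<Longrightarrow> respects_cover I j"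
  shows "I \<in> order_ideals \<alpha>"
proof -
  have "x \<in> I" if "(x, y) \<in> (fence_covers \<alpha>)\<^sup>*" "y \<in> I" for x y
    using that
  proof (induction rule: converse_rtrancl_induct)
    case (step x z)
    then show ?case
      using assms(2)[of x] assms(2)[of z] unfolding covers_iff respects_cover_def by (auto split: if_splits)
  qed
  then show ?thesis using assms(1) unfolding order_ideals_def fence_le_def by blast
qed

definition removable :: "nat set \<Rightarrow> nat \<Rightarrow> bool" where
  "removable I q \<longleftrightarrow> q \<in> I \<and> (q < n \<and> rising q \<longrightarrow> q + 1 \<notin> I) \<and> (2 \<le> q \<and> \<not> rising (q - 1) \<longrightarrow> q - 1 \<notin> I)"

definition addable :: "nat set \<Rightarrow> nat \<Rightarrow> bool" where
  "addable I q \<longleftrightarrow> q \<in> F \<and> q \<notin> I \<and>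
     (2 \<le> q \<and> rising (q - 1) \<longrightarrow> q - 1 \<in> I) \<and> (q < n \<and> \<not> rising q \<longrightarrow> q + 1 \<in> I)"

lemma is_max_in_iff:
  assumes I: "I \<in> order_ideals \<alpha>"
  shows "is_max_in \<alpha> q I \<longleftrightarrow> removable I q"
proof -
  have "is_max_in \<alpha> q I \<longleftrightarrow> q \<in> I \<and> (\<forall>z. (q, z) \<in> fence_covers \<alpha> \<longrightarrow> z \<notin> I)"
  proof (intro iffI conjI allI impI)
    assume "q \<in> I \<and> (\<forall>z. (q, z) \<in> fence_covers \<alpha> \<longrightarrow> z \<notin> I)"
    moreover have False if "fence_lt \<alpha> q y" "y \<in> I" "\<forall>z. (q, z) \<in> fence_covers \<alpha> \<longrightarrow> z \<notin> I" for y
    proof -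
      have "(q, y) \<in> (fence_covers \<alpha>)\<^sup>*" "q \<noteq> y" "y \<in> F"
        using that(1) unfolding fence_lt_def fence_le_def by auto
      then obtain z where "(q, z) \<in> fence_covers \<alpha>" "(z, y) \<in> (fence_covers \<alpha>)\<^sup>*"
        by (metis converse_rtranclE)
      then have "z \<in> I"
        using ideal_down_closed[OF I, of z y] covers_elems[of q z] \<open>y \<in> F\<close> that(2)
        unfolding fence_le_def by blast
      then show False using that(3) \<open>(q, z) \<in> fence_covers \<alpha>\<close> by blast
    qed
    ultimately show "is_max_in \<alpha> q I" unfolding is_max_in_def by blast
  qed (use cover_less in \<open>auto simp: is_max_in_def\<close>)
  also have "\<dots> \<longleftrightarrow> removable I q"
  proof (cases "q \<in> I")
    case True
    then have "q \<in> F" using ideal_subset[OF I] by blast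
    then show ?thesis unfolding removable_def upper_covers_iff[OF \<open>q \<in> F\<close>] by auto
  qed (simp add: removable_def)
  finally show ?thesis .
qed

lemma is_min_in_iff:
  assumes I: "I \<in> order_ideals \<alpha>"
  shows "is_min_in \<alpha> q (F - I) \<longleftrightarrow> addable I q"
proof -
  have "is_min_in \<alpha> q (F - I) \<longleftrightarrow> q \<in> F - I \<and> (\<forall>z. (z, q) \<in> fence_covers \<alpha> \<longrightarrow> z \<in> I)"
  proof (intro iffI conjI allI impI)
    assume "q \<in> F - I \<and> (\<forall>z. (z, q) \<in> fence_covers \<alpha> \<longrightarrow> z \<in> I)"
    moreover have False if "fence_lt \<alpha> y q" "y \<in> F - I" "\<forall>z. (z, q) \<in> fence_covers \<alpha> \<longrightarrow> z \<in> I" for y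
    proof -
      have "(y, q) \<in> (fence_covers \<alpha>)\<^sup>*" "y \<noteq> q"
        using that(1) unfolding fence_lt_def fence_le_def by auto
      then obtain z where "(y, z) \<in> (fence_covers \<alpha>)\<^sup>*" "(z, q) \<in> fence_covers \<alpha>"
        by (metis rtranclE)
      then have "y \<in> I"
        using ideal_down_closed[OF I, of y z] covers_elems[of z q] that(2,3)
        unfolding fence_le_def by blast
      then show False using that(2) by blast
    qed
    ultimately show "is_min_in \<alpha> q (F - I)" unfolding is_min_in_def by blast
  qed (use cover_less covers_elems in \<open>fastforce simp: is_min_in_def\<close>)+
  also have "\<dots> \<longleftrightarrow> addable I q"
  proof (cases "q \<in> F")
    case True
    then show ?thesis unfolding addable_def lower_covers_iff[OF True] by auto
  qed (simp add: addable_def)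
  finally show ?thesis .
qed

text \<open>Outside the window {m - 1, m, m + 1} the ideal is full or empty on each side, whichever agrees with
  the cover entering the window there; so only the covers inside the window constrain S.\<close>
definition window_ideal :: "nat \<Rightarrow> nat set \<Rightarrow> nat set" where
  "window_ideal m S = {x \<in> F. (x + 2 \<le> m \<and> rising (m - 2)) \<or> (m + 2 \<le> x \<and> \<not> rising (m + 1)) \<or> x \<in> S}"

lemma window_ideal_order_ideal:
  assumes "m \<in> F" "S \<subseteq> {m - 1..m + 1}"
    and "2 \<le> m \<Longrightarrow> respects_cover S (m - 1)" "m < n \<Longrightarrow> respects_cover S m"
  shows "window_ideal m S \<in> order_ideals \<alpha>"
proof (rule order_idealI)
  show "window_ideal m S \<subseteq> F" by (auto simp: window_ideal_def)
  fix j assume j: "1 \<le> j" "j < n"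
  consider "j + 2 < m" | "j + 2 = m" | "j + 1 = m" | "j = m" | "j = m + 1" | "m + 1 < j" by linarith
  then show "respects_cover (window_ideal m S) j"
    using assms j by cases (auto simp: respects_cover_def window_ideal_def mem_elems_iff)
qed

end

lemma max_principle_nonpos:
  fixes g :: "nat \<Rightarrow> real"
  assumes boundary: "g 0 = 0" "g (Suc N) = 0"
    and interior: "\<And>q. 1 \<le> q \<Longrightarrow> q \<le> N \<Longrightarrow> g q = 0 \<or> 2 * g q = g (q - 1) + g (q + 1)"
    and "k \<le> Suc N"
  shows "g k \<le> 0"
proof (rule ccontr)
  assume "\<not> g k \<le> 0"
  define M where "M = Max (g ` {..Suc N})"
  have le_M: "g i \<le> M" if "i \<le> Suc N" for i
    unfolding M_def using that by (intro Max_ge) auto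
  have "M \<in> g ` {..Suc N}"
    unfolding M_def by (intro Max_in) auto
  then have "\<exists>i. i \<le> Suc N \<and> g i = M" by auto
  then obtain k0 where k0: "k0 \<le> Suc N" "g k0 = M" and first: "\<And>i. i < k0 \<Longrightarrow> \<not> (i \<le> Suc N \<and> g i = M)"
    unfolding exists_least_iff[of "\<lambda>i. i \<le> Suc N \<and> g i = M"] by blast
  have "M > 0" using le_M[OF \<open>k \<le> Suc N\<close>] \<open>\<not> g k \<le> 0\<close> by linarith
  then have "k0 \<noteq> 0" "k0 \<noteq> Suc N" using k0(2) boundary by (metis less_irrefl)+
  then have "1 \<le> k0" "k0 \<le> N" using k0(1) by auto
  moreover have "g (k0 - 1) < M"
    using first[of "k0 - 1"] le_M[of "k0 - 1"] \<open>1 \<le> k0\<close> k0(1) by fastforce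
  moreover have "g (k0 + 1) \<le> M"
    using le_M[of "k0 + 1"] \<open>k0 \<le> N\<close> by simp
  ultimately show False
    using interior[of k0] k0(2) \<open>M > 0\<close> by auto
qed

lemma max_principle:
  fixes g :: "nat \<Rightarrow> real"
  assumes "g 0 = 0" "g (Suc N) = 0"
    and "\<And>q. 1 \<le> q \<Longrightarrow> q \<le> N \<Longrightarrow> g q = 0 \<or> 2 * g q = g (q - 1) + g (q + 1)"
    and "k \<le> Suc N"
  shows "g k = 0"
proof -
  have "g k \<le> 0" using max_principle_nonpos[of g N k] assms by blast
  moreover have "- g k \<le> 0"
    using max_principle_nonpos[of "\<lambda>x. - g x" N k] assms by fastforce
  ultimately show ?thesis by simp
qed

locale toggle_const_combination = fence +
  fixes D cq :: "nat \<Rightarrow> real" and c :: real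
  assumes D_outside: "q \<notin> F \<Longrightarrow> D q = 0"
    and cq_outside: "q \<notin> F \<Longrightarrow> cq q = 0"
    and D_not_turning: "\<not> turning q \<Longrightarrow> D q = 0"
    and sum_eq_const: "I \<in> order_ideals \<alpha> \<Longrightarrow> (\<Sum>r\<in>F. D r * chi \<alpha> r I - cq r * tog \<alpha> r I) = c"
begin

definition contrib :: "nat set \<Rightarrow> nat \<Rightarrow> real" where
  "contrib I r = D r * chi \<alpha> r I - cq r * tog \<alpha> r I"

lemma contrib_eq:
  assumes "I \<in> order_ideals \<alpha>"
  shows "contrib I r = (if addable I r then - cq r else if removable I r then D r + cq r else 0)"
proof -
  have "addable I r \<Longrightarrow> \<not> removable I r" by (simp add: addable_def removable_def)
  then show ?thesis
    unfolding contrib_def chi_def tog_def is_max_in_iff[OF assms] is_min_in_iff[OF assms] by simp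
qed

lemma contrib_outside: "I \<in> order_ideals \<alpha> \<Longrightarrow> r \<notin> F \<Longrightarrow> contrib I r = 0"
  using ideal_subset by (auto simp: contrib_eq addable_def removable_def)

lemma contrib_local:
  assumes "I \<in> order_ideals \<alpha>" "J \<in> order_ideals \<alpha>" "\<And>x. x \<in> {r - 1, r, r + 1} \<Longrightarrow> x \<in> I \<longleftrightarrow> x \<in> J"
  shows "contrib I r = contrib J r"
proof -
  have "r - 1 \<in> I \<longleftrightarrow> r - 1 \<in> J" "r \<in> I \<longleftrightarrow> r \<in> J" "r + 1 \<in> I \<longleftrightarrow> r + 1 \<in> J"
    using assms(3) by auto
  then have "addable I r \<longleftrightarrow> addable J r" "removable I r \<longleftrightarrow> removable J r"
    unfolding addable_def removable_def by simp_all
  then show ?thesis by (simp add: contrib_eq[OF assms(1)] contrib_eq[OF assms(2)])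
qed

lemma sum_contrib: "I \<in> order_ideals \<alpha> \<Longrightarrow> (\<Sum>r\<in>F. contrib I r) = c"
  unfolding contrib_def by (rule sum_eq_const)

text \<open>Since contributions are local, changing an ideal independently at m - 1 and at m + 1 leaves
  every contribution except that of m additive.\<close>
lemma contrib_square:
  assumes ideals: "I00 \<in> order_ideals \<alpha>" "I10 \<in> order_ideals \<alpha>" "I01 \<in> order_ideals \<alpha>" "I11 \<in> order_ideals \<alpha>"
    and "m \<in> F"
    and "\<And>x. x \<noteq> m - 1 \<Longrightarrow> (x \<in> I00 \<longleftrightarrow> x \<in> I10) \<and> (x \<in> I01 \<longleftrightarrow> x \<in> I11)"
    and "\<And>x. x \<noteq> m + 1 \<Longrightarrow> (x \<in> I00 \<longleftrightarrow> x \<in> I01) \<and> (x \<in> I10 \<longleftrightarrow> x \<in> I11)"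
  shows "contrib I00 m - contrib I10 m - contrib I01 m + contrib I11 m = 0"
proof -
  define \<phi> where "\<phi> r = contrib I00 r - contrib I10 r - contrib I01 r + contrib I11 r" for r
  have "(\<Sum>r\<in>F. \<phi> r) = 0"
    unfolding \<phi>_def using sum_contrib[OF ideals(1)] sum_contrib[OF ideals(2)] sum_contrib[OF ideals(3)]
      sum_contrib[OF ideals(4)] by (simp add: sum.distrib sum_subtractf)
  moreover have "\<phi> r = 0" if "r \<in> F" "r \<noteq> m" for r
  proof (cases "m - 1 \<in> {r - 1, r, r + 1}")
    case False
    then have "contrib I00 r = contrib I10 r" "contrib I01 r = contrib I11 r"
      using contrib_local[OF ideals(1,2), of r] contrib_local[OF ideals(3,4), of r] assms(6) by metis+
    then show ?thesis by (simp add: \<phi>_def)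
  next
    case True
    then have "m + 1 \<notin> {r - 1, r, r + 1}" using that \<open>m \<in> F\<close> by (auto simp: mem_elems_iff)
    then have "contrib I00 r = contrib I01 r" "contrib I10 r = contrib I11 r"
      using contrib_local[OF ideals(1,3), of r] contrib_local[OF ideals(2,4), of r] assms(7) by metis+
    then show ?thesis by (simp add: \<phi>_def)
  qed
  ultimately have "\<phi> m = 0"
    using sum.remove[of F m \<phi>] \<open>m \<in> F\<close> by (simp add: fence_elems_def)
  then show ?thesis by (simp add: \<phi>_def)
qed

lemma contrib_toggle:
  assumes I: "I \<in> order_ideals \<alpha>" and J: "J \<in> order_ideals \<alpha>"
    and "1 \<le> q" and "\<And>x. x \<noteq> q \<Longrightarrow> x \<in> I \<longleftrightarrow> x \<in> J"
  shows "(contrib J (q - 1) - contrib I (q - 1)) + (contrib J q - contrib I q)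
    + (contrib J (q + 1) - contrib I (q + 1)) = 0"
proof -
  define \<psi> where "\<psi> r = contrib J r - contrib I r" for r
  define W where "W = {q - 1, q, q + 1}"
  have fin: "finite F" by (simp add: fence_elems_def)
  have "\<psi> r = 0" if "r \<notin> W" for r
  proof -
    have "q \<notin> {r - 1, r, r + 1}" using that by (auto simp: W_def)
    then show ?thesis using contrib_local[OF I J, of r] assms(4) by (metis \<psi>_def diff_self)
  qed
  moreover have "\<psi> r = 0" if "r \<notin> F" for r
    using contrib_outside[OF I that] contrib_outside[OF J that] by (simp add: \<psi>_def)
  ultimately have "(\<Sum>r\<in>F. \<psi> r) = (\<Sum>r\<in>W. \<psi> r)"
    using fin by (intro sum.mono_neutral_cong) (auto simp: W_def)
  moreover have "(\<Sum>r\<in>F. \<psi> r) = 0"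
    using sum_contrib[OF I] sum_contrib[OF J] by (simp add: \<psi>_def sum_subtractf)
  moreover have "(\<Sum>r\<in>W. \<psi> r) = \<psi> (q - 1) + \<psi> q + \<psi> (q + 1)"
  proof -
    have "q - 1 \<noteq> q" "q - 1 \<noteq> q + 1" using \<open>1 \<le> q\<close> by auto
    then show ?thesis by (simp add: W_def)
  qed
  ultimately show ?thesis by (simp add: \<psi>_def)
qed

text \<open>A toggle at q sees its neighbour r through cq r, and through D r as well when r lies below q. Since
  D vanishes off the turning points, a peak lies above and a valley below both its neighbours, this is
  always weight r.\<close>
definition weight :: "nat \<Rightarrow> real" where
  "weight r = cq r + (if rising (r - 1) \<and> \<not> rising r then 0 else D r)"

lemma weight_outside: "r \<notin> F \<Longrightarrow> weight r = 0"
  by (simp add: weight_def D_outside cq_outside)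

lemma toggle_recurrence:
  assumes "q \<in> F"
  shows "D q + 2 * cq q = weight (q - 1) + weight (q + 1)"
proof -
  define L where "L = {x. (x = q - 1 \<and> rising (q - 1)) \<or> (x = q + 1 \<and> \<not> rising q)}"
  define I where "I = window_ideal q L"
  define J where "J = window_ideal q (insert q L)"
  have q: "1 \<le> q" "q \<le> n" using assms by (simp_all add: mem_elems_iff)
  have I: "I \<in> order_ideals \<alpha>" unfolding I_def
    by (rule window_ideal_order_ideal) (use assms in \<open>auto simp: L_def respects_cover_def\<close>)
  have J: "J \<in> order_ideals \<alpha>" unfolding J_def
    by (rule window_ideal_order_ideal) (use assms in \<open>auto simp: L_def respects_cover_def\<close>)
  have "(contrib J (q - 1) - contrib I (q - 1)) + (contrib J q - contrib I q)
      + (contrib J (q + 1) - contrib I (q + 1)) = 0"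
    by (rule contrib_toggle[OF I J q(1)]) (auto simp: I_def J_def window_ideal_def L_def)
  moreover have "contrib J q - contrib I q = D q + 2 * cq q"
    unfolding contrib_eq[OF I] contrib_eq[OF J] using assms q
    by (auto simp: I_def J_def window_ideal_def L_def removable_def addable_def mem_elems_iff)
  moreover have "contrib J (q - 1) - contrib I (q - 1) = - weight (q - 1)"
  proof (cases "q - 1 \<in> F")
    case False
    then show ?thesis using contrib_outside[OF I] contrib_outside[OF J] weight_outside by simp
  next
    case True
    then obtain k where k: "q = Suc (Suc k)" using q by (cases q; cases "q - 1") (auto simp: mem_elems_iff)
    show ?thesis
      unfolding contrib_eq[OF I] contrib_eq[OF J] using True assms D_not_turning[of "q - 1"]
      by (cases "rising (q - 1)")
        (auto simp: I_def J_def window_ideal_def L_def removable_def addable_def weight_def k mem_elems_iff)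
  qed
  moreover have "contrib J (q + 1) - contrib I (q + 1) = - weight (q + 1)"
  proof (cases "q + 1 \<in> F")
    case False
    then show ?thesis using contrib_outside[OF I] contrib_outside[OF J] weight_outside by simp
  next
    case True
    show ?thesis
      unfolding contrib_eq[OF I] contrib_eq[OF J] using True assms D_not_turning[of "q + 1"]
      by (cases "rising q")
        (auto simp: I_def J_def window_ideal_def L_def removable_def addable_def weight_def mem_elems_iff)
  qed
  ultimately show ?thesis by linarith
qed

lemma weight_turning:
  assumes "p \<in> F" "turning p"
  shows "weight p = 0"
proof -
  have p: "2 \<le> p" "p < n" using turning_bounds[OF assms] by auto
  then obtain k where k: "p = Suc (Suc k)" by (metis add_2_eq_Suc le_Suc_ex)
  define B where "B = (if rising p then {p} else {})"
  define W where "W S = window_ideal p (B \<union> S)" for S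
  have ideal: "W S \<in> order_ideals \<alpha>" if "S \<subseteq> {p - 1, p + 1}" for S
    unfolding W_def
    by (rule window_ideal_order_ideal) (use assms that in \<open>auto simp: B_def respects_cover_def\<close>)
  then have ideals: "W {} \<in> order_ideals \<alpha>" "W {p - 1} \<in> order_ideals \<alpha>"
    "W {p + 1} \<in> order_ideals \<alpha>" "W {p - 1, p + 1} \<in> order_ideals \<alpha>"
    by auto
  have "contrib (W {}) p - contrib (W {p - 1}) p - contrib (W {p + 1}) p + contrib (W {p - 1, p + 1}) p = 0"
    by (rule contrib_square[OF ideals]) (use assms in \<open>auto simp: W_def window_ideal_def B_def\<close>)
  then show ?thesis
    unfolding contrib_eq[OF ideals(1)] contrib_eq[OF ideals(2)] contrib_eq[OF ideals(3)] contrib_eq[OF ideals(4)]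
    using assms p
    by (auto simp: W_def window_ideal_def B_def removable_def addable_def weight_def mem_elems_iff k)
qed

lemma weight_eq_0: "weight r = 0"
proof (cases "r \<le> Suc n")
  case True
  show ?thesis
  proof (rule max_principle[OF _ _ _ True])
    show "weight 0 = 0" "weight (Suc n) = 0" by (simp_all add: weight_outside mem_elems_iff)
    fix q assume "1 \<le> q" "q \<le> n"
    then have "q \<in> F" by (simp add: mem_elems_iff)
    show "weight q = 0 \<or> 2 * weight q = weight (q - 1) + weight (q + 1)"
    proof (cases "turning q")
      case True
      then show ?thesis using weight_turning \<open>q \<in> F\<close> by blast
    next
      case False
      then show ?thesis using toggle_recurrence[OF \<open>q \<in> F\<close>] D_not_turning[OF False] by (simp add: weight_def)
    qed
  qed
qed (simp add: weight_outside mem_elems_iff)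

lemma D_eq_0: "D q = 0"
proof (cases "q \<in> F \<and> turning q")
  case True
  then have "D q + 2 * cq q = 0" "weight q = 0"
    using toggle_recurrence[of q] weight_eq_0 by auto
  then show ?thesis by (auto simp: weight_def split: if_splits)
qed (use D_outside D_not_turning in blast)

end

lemma (in fence) shared_coefficients_vanish:
  assumes "\<forall>I\<in>order_ideals \<alpha>.
    (\<Sum>i\<in>{1..t - 1}. d i * chi \<alpha> (shared \<alpha> i) I) = c + (\<Sum>q\<in>F. cq q * tog \<alpha> q I)"
  shows "\<forall>i\<in>{1..t - 1}. d i = 0"
proof -
  define A where "A = {1..t - 1}"
  have inj: "inj_on (apart \<alpha>) A" using inj_on_shared by (simp add: A_def)
  define D where "D x = (if x \<in> apart \<alpha> ` A then d (the_inv_into A (apart \<alpha>) x) else 0)" for x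
  define cq' where "cq' q = (if q \<in> F then cq q else 0)" for q
  have D_shared: "D (apart \<alpha> i) = d i" if "i \<in> A" for i
    using that the_inv_into_f_f[OF inj that] by (simp add: D_def)
  have shared_elems: "apart \<alpha> ` A \<subseteq> F"
    using shared_bounds by (force simp: A_def mem_elems_iff)
  have sum_shared: "(\<Sum>i\<in>A. d i * chi \<alpha> (shared \<alpha> i) I) = (\<Sum>x\<in>F. D x * chi \<alpha> x I)" for I
  proof -
    have "(\<Sum>i\<in>A. d i * chi \<alpha> (shared \<alpha> i) I) = (\<Sum>x\<in>apart \<alpha> ` A. D x * chi \<alpha> x I)"
      by (simp add: sum.reindex[OF inj] D_shared shared_def)
    also have "\<dots> = (\<Sum>x\<in>F. D x * chi \<alpha> x I)"
      using shared_elems by (intro sum.mono_neutral_left) (auto simp: D_def fence_elems_def)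
    finally show ?thesis .
  qed
  interpret toggle_const_combination \<alpha> D cq' c
  proof
    show "D q = 0" if "q \<notin> F" for q
      using that shared_elems by (auto simp: D_def)
    show "cq' q = 0" if "q \<notin> F" for q
      using that by (simp add: cq'_def)
    show "D q = 0" if "\<not> turning q" for q
      using that shared_turning by (auto simp: D_def A_def)
    fix I assume "I \<in> order_ideals \<alpha>"
    then show "(\<Sum>r\<in>F. D r * chi \<alpha> r I - cq' r * tog \<alpha> r I) = c"
      using assms sum_shared[of I] by (simp add: sum_subtractf cq'_def A_def)
  qed
  show ?thesis using D_eq_0 D_shared by (simp add: A_def)
qed

theorem lemma3p4:
  fixes \<alpha> :: "nat list"
  assumes "fence_comp \<alpha>"
  shows "(\<forall>d :: nat \<Rightarrow> real.
            (\<forall>I\<in>order_ideals \<alpha>. (\<Sum>i\<in>{1..length \<alpha> - 1}. d i * chi \<alpha> (shared \<alpha> i) I) = 0)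
            \<longrightarrow> (\<forall>i\<in>{1..length \<alpha> - 1}. d i = 0))
       \<and> (\<forall>f :: nat set \<Rightarrow> real.
            (\<exists>d :: nat \<Rightarrow> real. \<forall>I\<in>order_ideals \<alpha>.
                f I = (\<Sum>i\<in>{1..length \<alpha> - 1}. d i * chi \<alpha> (shared \<alpha> i) I))
            \<and> in_AT \<alpha> f
            \<longrightarrow> (\<forall>I\<in>order_ideals \<alpha>. f I = 0))"
proof -
  interpret fence \<alpha> by (rule fence.intro) (rule assms)
  show ?thesis
  proof (intro conjI allI impI)
    fix d :: "nat \<Rightarrow> real"
    assume "\<forall>I\<in>order_ideals \<alpha>. (\<Sum>i\<in>{1..length \<alpha> - 1}. d i * chi \<alpha> (shared \<alpha> i) I) = 0"
    then show "\<forall>i\<in>{1..length \<alpha> - 1}. d i = 0"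
      by (intro shared_coefficients_vanish[of d 0 "\<lambda>_. 0"]) simp
  next
    fix f :: "nat set \<Rightarrow> real"
    assume "(\<exists>d. \<forall>I\<in>order_ideals \<alpha>. f I = (\<Sum>i\<in>{1..length \<alpha> - 1}. d i * chi \<alpha> (shared \<alpha> i) I))
      \<and> in_AT \<alpha> f"
    then obtain d c cq
      where d: "\<forall>I\<in>order_ideals \<alpha>. f I = (\<Sum>i\<in>{1..length \<alpha> - 1}. d i * chi \<alpha> (shared \<alpha> i) I)"
        and c: "\<forall>I\<in>order_ideals \<alpha>. f I = c + (\<Sum>q\<in>F. cq q * tog \<alpha> q I)"
      unfolding in_AT_def toggle_const_def by blast
    have "\<forall>i\<in>{1..length \<alpha> - 1}. d i = 0"
      by (rule shared_coefficients_vanish[of d c cq]) (use d c in simp)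
    then show "\<forall>I\<in>order_ideals \<alpha>. f I = 0" using d by simp
  qed
qed

end
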